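(* Let $K\subseteq\mathbb{R}^n$ be any closed convex cone and $c\in\mathbb{R}^n$ an arbitrary vector. Then the set $\{X\in\mathbb{S}^n_+:\ Xc\in K\}$ is rank-one generated.
   Context: $\mathbb{S}^n_+$ is the cone of real symmetric positive semidefinite $n\times n$ matrices. A closed convex cone $\mathcal{S}\subseteq\mathbb{S}^n_+$ is rank-one generated (ROG) if $\mathcal{S}=\mathrm{conv}(\mathcal{S}\cap\{xx^\top:x\in\mathbb{R}^n\})$. *)

theory Defs
  imports "HOL-Analysis.Analysis"
begin

definition psd_cone :: "(real^'n^'n) set" where
  "psd_cone = {X. transpose X = X \<and> (\<forall>x. 0 \<le> x \<bullet> (X *v x))}"

definition outer :: "real^'n \<Rightarrow> real^'n^'n" where
  "outer x = (\<chi> i j. x $ i * x $ j)"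

definition rank_one_generated :: "(real^'n^'n) set \<Rightarrow> bool" where
  "rank_one_generated S \<longleftrightarrow>
     closed S \<and> convex S \<and> cone S \<and> S \<subseteq> psd_cone \<and>
     S = convex hull (S \<inter> {outer x | x. True})"

end

theory Submission
  imports Defs
begin

text \<open>Let X be PSD with X c \<in> K. Peeling off u u^T with u = X c / sqrt (c^T X c)
  (or u = 0 if c^T X c = 0) leaves a PSD matrix Y with Y c = 0, while u u^T c = X c \<in> K.
  Writing Y = \<Sum> v v^T, the identity c^T Y c = \<Sum> (v \<bullet> c)^2 = 0 forces v v^T c = 0 \<in> K.
  So X is a sum of rank-one members of the convex cone, hence lies in their convex hull.\<close>

lemma inner_matrix_vector_commute:
  fixes Y :: "real^'n^'n"
  assumes "transpose Y = Y"
  shows "x \<bullet> (Y *v y) = y \<bullet> (Y *v x)"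
  by (metis assms dot_lmul_matrix inner_commute transpose_matrix_vector)

lemma outer_mult_vector: "outer u *v x = (u \<bullet> x) *\<^sub>R u"
  by (simp add: outer_def vec_eq_iff matrix_vector_mult_def inner_vec_def sum_distrib_left
      sum_distrib_right mult.commute mult.left_commute)

lemma transpose_outer: "transpose (outer u) = outer u"
  by (simp add: outer_def transpose_def vec_eq_iff mult.commute)

lemma quadratic_form_outer: "x \<bullet> (outer u *v x) = (u \<bullet> x)\<^sup>2"
  by (simp add: outer_mult_vector power2_eq_square inner_commute)

lemma outer_scaleR: "outer (a *\<^sub>R u) = a\<^sup>2 *\<^sub>R outer u"
  by (simp add: outer_def vec_eq_iff power2_eq_square)

lemma outer_0 [simp]: "outer 0 = 0"
  by (simp add: outer_def vec_eq_iff)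

lemma quadratic_form_sum_outer:
  "x \<bullet> ((\<Sum>v\<leftarrow>vs. outer v) *v x) = (\<Sum>v\<leftarrow>vs. (v \<bullet> x)\<^sup>2)"
  by (induction vs)
    (simp_all add: matrix_vector_mult_add_rdistrib inner_add_right quadratic_form_outer)

lemma transpose_add: "transpose (A + B) = transpose A + transpose B"
  by (simp add: transpose_def vec_eq_iff)

lemma transpose_diff: "transpose (A - B) = transpose A - transpose B"
  by (simp add: transpose_def vec_eq_iff)

lemma psd_coneI: "transpose X = X \<Longrightarrow> (\<And>x. 0 \<le> x \<bullet> (X *v x)) \<Longrightarrow> X \<in> psd_cone"
  by (simp add: psd_cone_def)

lemma psd_coneD:
  assumes "X \<in> psd_cone"
  shows "transpose X = X" "0 \<le> x \<bullet> (X *v x)"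
  using assms by (simp_all add: psd_cone_def)

lemma outer_in_psd_cone: "outer u \<in> psd_cone"
  by (simp add: psd_coneI transpose_outer quadratic_form_outer)

lemma psd_cone_add: "X \<in> psd_cone \<Longrightarrow> Y \<in> psd_cone \<Longrightarrow> X + Y \<in> psd_cone"
  by (intro psd_coneI)
    (simp_all add: psd_coneD transpose_add matrix_vector_mult_add_rdistrib inner_add_right
      add_nonneg_nonneg)

lemma psd_cone_scaleR: "X \<in> psd_cone \<Longrightarrow> 0 \<le> t \<Longrightarrow> t *\<^sub>R X \<in> psd_cone"
  by (intro psd_coneI)
    (simp_all add: psd_coneD transpose_scalar flip: scaleR_matrix_vector_assoc)

lemma convex_psd_cone: "convex psd_cone"
  by (auto intro!: convexI psd_cone_add psd_cone_scaleR)

lemma bounded_linear_matrix_vector_mult_left: "bounded_linear (\<lambda>X::real^'n^'m. X *v c)"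
  unfolding linear_conv_bounded_linear[symmetric]
  by (intro linearI) (simp_all add: matrix_vector_mult_add_rdistrib scaleR_matrix_vector_assoc)

lemma closed_psd_cone: "closed (psd_cone :: (real^'n^'n) set)"
proof -
  have psd_cone_eq: "(psd_cone :: (real^'n^'n) set) =
      (\<Inter>x. {X. 0 \<le> x \<bullet> (X *v x)}) \<inter> (\<Inter>i. \<Inter>j. {X. X $ i $ j = X $ j $ i})"
    by (auto simp: psd_cone_def transpose_def vec_eq_iff)
  show ?thesis
    unfolding psd_cone_eq
    by (intro closed_Int closed_INT ballI closed_Collect_le closed_Collect_eq
        continuous_intros linear_continuous_on bounded_linear_matrix_vector_mult_left)
qed

lemma discriminant_le_of_quadratic_nonneg:
  fixes a b d :: real
  assumes "0 \<le> d" and nonneg: "\<And>t. 0 \<le> a + 2 * b * t + d * t\<^sup>2"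
  shows "b\<^sup>2 \<le> a * d"
proof (cases "d = 0")
  case True
  have "b = 0"
  proof (rule ccontr)
    assume "b \<noteq> 0"
    then have "a + 2 * b * (- (a + 1) / (2 * b)) + d * (- (a + 1) / (2 * b))\<^sup>2 = -1"
      using True by (simp add: field_simps)
    with nonneg show False by (metis neg_0_le_iff_le not_one_le_zero)
  qed
  with True show ?thesis by simp
next
  case False
  with \<open>0 \<le> d\<close> have "0 < d" by simp
  have "0 \<le> a + 2 * b * (- b / d) + d * (- b / d)\<^sup>2" by (rule nonneg)
  with \<open>0 < d\<close> show ?thesis by (simp add: field_simps power2_eq_square)
qed

lemma psd_cauchy_schwarz:
  assumes "Y \<in> psd_cone"
  shows "(x \<bullet> (Y *v e))\<^sup>2 \<le> (x \<bullet> (Y *v x)) * (e \<bullet> (Y *v e))"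
proof (rule discriminant_le_of_quadratic_nonneg)
  show "0 \<le> e \<bullet> (Y *v e)" using assms by (rule psd_coneD)
  fix t
  have "e \<bullet> (Y *v x) = x \<bullet> (Y *v e)"
    using inner_matrix_vector_commute[OF psd_coneD(1)[OF assms]] by metis
  then have "(x + t *\<^sub>R e) \<bullet> (Y *v (x + t *\<^sub>R e))
      = x \<bullet> (Y *v x) + 2 * (x \<bullet> (Y *v e)) * t + (e \<bullet> (Y *v e)) * t\<^sup>2"
    by (simp add: matrix_vector_right_distrib matrix_vector_mult_scaleR inner_add_left
        inner_add_right algebra_simps power2_eq_square)
  with psd_coneD(2)[OF assms]
  show "0 \<le> x \<bullet> (Y *v x) + 2 * (x \<bullet> (Y *v e)) * t + (e \<bullet> (Y *v e)) * t\<^sup>2"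
    by metis
qed

lemma psd_quadratic_form_eq_0_imp_mult_eq_0:
  assumes "Y \<in> psd_cone" "e \<bullet> (Y *v e) = 0"
  shows "Y *v e = 0"
  using psd_cauchy_schwarz[OF assms(1), of "Y *v e" e] assms(2) by simp

text \<open>Positive semidefiniteness of Y - u u^T is the Cauchy-Schwarz inequality for the
  semi-inner product (x, y) \<mapsto> x \<bullet> (Y *v y).\<close>
lemma psd_minus_outer:
  assumes "Y \<in> psd_cone" "0 < e \<bullet> (Y *v e)"
  defines "u \<equiv> (1 / sqrt (e \<bullet> (Y *v e))) *\<^sub>R (Y *v e)"
  shows "Y - outer u \<in> psd_cone" "outer u *v e = Y *v e"
proof -
  define a where "a = e \<bullet> (Y *v e)"
  have "0 < a" using assms(2) by (simp add: a_def)
  have "u \<bullet> e = sqrt a"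
    using \<open>0 < a\<close> by (simp add: u_def a_def[symmetric] inner_commute real_div_sqrt)
  then show "outer u *v e = Y *v e"
    using \<open>0 < a\<close> by (simp add: outer_mult_vector u_def a_def[symmetric])
  show "Y - outer u \<in> psd_cone"
  proof (rule psd_coneI)
    show "transpose (Y - outer u) = Y - outer u"
      by (simp add: transpose_diff transpose_outer psd_coneD(1)[OF assms(1)])
  next
    fix x
    have "(u \<bullet> x)\<^sup>2 = (x \<bullet> (Y *v e))\<^sup>2 / a"
      using \<open>0 < a\<close>
      by (simp add: u_def a_def[symmetric] power_divide power_mult_distrib inner_commute)
    also have "\<dots> \<le> x \<bullet> (Y *v x)"
      using psd_cauchy_schwarz[OF assms(1), of x e] \<open>0 < a\<close>
      by (simp add: a_def pos_divide_le_eq)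
    finally show "0 \<le> x \<bullet> ((Y - outer u) *v x)"
      by (simp add: matrix_vector_mult_diff_rdistrib inner_diff_right quadratic_form_outer)
  qed
qed

lemma diagonal_eq_quadratic_form: "Y $ j $ j = axis j 1 \<bullet> (Y *v axis j 1)"
  by (simp add: matrix_vector_mult_basis inner_axis' column_def)

lemma psd_diagonal_eq_0_imp_eq_0:
  assumes "Y \<in> psd_cone" "\<And>j. Y $ j $ j = 0"
  shows "Y = 0"
proof -
  have "Y *v axis j 1 = 0" for j
    using psd_quadratic_form_eq_0_imp_mult_eq_0[OF assms(1)] assms(2) diagonal_eq_quadratic_form
    by metis
  then have "column j Y = 0" for j
    by (simp add: matrix_vector_mult_basis)
  then show ?thesis by (simp add: column_def vec_eq_iff)
qed

text \<open>A step of Cholesky factorisation. Zero diagonal entries stay zero because subtracting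
  u u^T only decreases the diagonal, which remains nonnegative.\<close>
lemma psd_cholesky_step:
  assumes "Y \<in> psd_cone" "Y $ i $ i \<noteq> 0"
  obtains u where "Y - outer u \<in> psd_cone"
    and "{j. (Y - outer u) $ j $ j \<noteq> 0} \<subset> {j. Y $ j $ j \<noteq> 0}"
proof -
  define e :: "real^'a" where "e = axis i 1"
  have "0 < e \<bullet> (Y *v e)"
    using assms psd_coneD(2)[OF assms(1), of e] diagonal_eq_quadratic_form[of Y i]
    by (simp add: e_def)
  define u where "u = (1 / sqrt (e \<bullet> (Y *v e))) *\<^sub>R (Y *v e)"
  define Z where "Z = Y - outer u"
  have "Z \<in> psd_cone" and "Z *v e = 0"
    using psd_minus_outer[OF assms(1) \<open>0 < e \<bullet> (Y *v e)\<close>]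
    by (simp_all add: Z_def u_def matrix_vector_mult_diff_rdistrib)
  have "Z $ j $ j = 0" if "Y $ j $ j = 0" for j
  proof -
    have "Z $ j $ j = - (u $ j)\<^sup>2"
      using that by (simp add: Z_def outer_def power2_eq_square)
    moreover have "0 \<le> Z $ j $ j"
      using psd_coneD(2)[OF \<open>Z \<in> psd_cone\<close>] by (simp add: diagonal_eq_quadratic_form)
    ultimately show ?thesis by simp
  qed
  moreover have "Z $ i $ i = 0"
    using \<open>Z *v e = 0\<close> by (simp add: diagonal_eq_quadratic_form e_def)
  ultimately have "{j. Z $ j $ j \<noteq> 0} \<subset> {j. Y $ j $ j \<noteq> 0}"
    using assms(2) by blast
  with \<open>Z \<in> psd_cone\<close> show ?thesis by (intro that) (simp_all add: Z_def)
qed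

lemma psd_eq_sum_outer:
  assumes "Y \<in> psd_cone"
  obtains vs where "Y = (\<Sum>v\<leftarrow>vs. outer v)"
  using assms
proof (induction "card {j. Y $ j $ j \<noteq> 0}" arbitrary: Y thesis rule: less_induct)
  case less
  show ?case
  proof (cases "\<forall>j. Y $ j $ j = 0")
    case True
    then show ?thesis
      using less.prems psd_diagonal_eq_0_imp_eq_0 by (metis list.map(1) sum_list.Nil)
  next
    case False
    then obtain i where "Y $ i $ i \<noteq> 0" by blast
    with less.prems(2) obtain u where Z: "Y - outer u \<in> psd_cone"
      and smaller: "{j. (Y - outer u) $ j $ j \<noteq> 0} \<subset> {j. Y $ j $ j \<noteq> 0}"
      by (rule psd_cholesky_step)
    from smaller have "card {j. (Y - outer u) $ j $ j \<noteq> 0} < card {j. Y $ j $ j \<noteq> 0}"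
      by (intro psubset_card_mono) auto
    then obtain vs where "Y - outer u = (\<Sum>v\<leftarrow>vs. outer v)"
      using less.hyps Z by blast
    then have "Y = (\<Sum>v\<leftarrow>u # vs. outer v)" by (simp add: algebra_simps)
    then show ?thesis by (rule less.prems(1))
  qed
qed

lemma psd_kernel_eq_sum_outer:
  assumes "Y \<in> psd_cone" "Y *v c = 0"
  obtains vs where "Y = (\<Sum>v\<leftarrow>vs. outer v)" and "\<forall>v\<in>set vs. v \<bullet> c = 0"
proof -
  obtain vs where vs: "Y = (\<Sum>v\<leftarrow>vs. outer v)"
    using assms(1) by (rule psd_eq_sum_outer)
  then have "(\<Sum>v\<leftarrow>vs. (v \<bullet> c)\<^sup>2) = 0"
    using assms(2) quadratic_form_sum_outer[of c vs] by simp
  then have "\<forall>v\<in>set vs. v \<bullet> c = 0"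
    by (subst (asm) sum_list_nonneg_eq_0_iff) auto
  with vs show ?thesis by (rule that)
qed

lemma psd_eq_outer_plus_sum_outer_orthogonal:
  assumes "X \<in> psd_cone"
  obtains u vs where "X = outer u + (\<Sum>v\<leftarrow>vs. outer v)" and "outer u *v c = X *v c"
    and "\<forall>v\<in>set vs. v \<bullet> c = 0"
proof -
  obtain u where psd: "X - outer u \<in> psd_cone" and carries: "outer u *v c = X *v c"
  proof (cases "0 < c \<bullet> (X *v c)")
    case True
    then show ?thesis using psd_minus_outer[OF assms] that by blast
  next
    case False
    then have "c \<bullet> (X *v c) = 0" using psd_coneD(2)[OF assms, of c] by simp
    then have "X *v c = 0" by (rule psd_quadratic_form_eq_0_imp_mult_eq_0[OF assms])
    with assms show ?thesis by (intro that[of 0]) simp_all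
  qed
  from carries have "(X - outer u) *v c = 0"
    by (simp add: matrix_vector_mult_diff_rdistrib)
  with psd obtain vs where "X - outer u = (\<Sum>v\<leftarrow>vs. outer v)" "\<forall>v\<in>set vs. v \<bullet> c = 0"
    by (rule psd_kernel_eq_sum_outer)
  with carries show ?thesis
    by (intro that[of u vs]) (simp_all add: algebra_simps)
qed

lemma sum_list_in_convex_cone:
  assumes "convex_cone C" "set xs \<subseteq> C"
  shows "sum_list xs \<in> C"
  using assms(2) by (induction xs) (simp_all add: convex_cone_contains_0 convex_cone_add assms(1))

lemma convex_cone_convex_hull:
  assumes "cone S" "S \<noteq> {}"
  shows "convex_cone (convex hull S)"
proof -
  have "conic (convex hull S)"
    using cone_convex_hull[OF assms(1)] unfolding cone_def conic_def by blast
  with assms(2) show ?thesis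
    by (simp add: convex_cone_def convex_hull_eq_empty)
qed

lemma convex_cone_eq_convex_hull_of_sums:
  assumes "convex S" "cone S" "cone T" "0 \<in> T"
    and decomp: "\<And>X. X \<in> S \<Longrightarrow> \<exists>xs. set xs \<subseteq> S \<inter> T \<and> X = sum_list xs"
  shows "S = convex hull (S \<inter> T)"
proof
  show "convex hull (S \<inter> T) \<subseteq> S"
    using hull_minimal[of "S \<inter> T" S convex] \<open>convex S\<close> by blast
next
  show "S \<subseteq> convex hull (S \<inter> T)"
  proof
    fix X assume "X \<in> S"
    then obtain xs where xs: "set xs \<subseteq> S \<inter> T" "X = sum_list xs"
      using decomp by blast
    have "cone (S \<inter> T)"
      using \<open>cone S\<close> \<open>cone T\<close> by (meson IntD1 IntD2 IntI cone_def)
    moreover have "0 \<in> S"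
      using cone_contains_0[OF \<open>cone S\<close>] \<open>X \<in> S\<close> by blast
    with \<open>0 \<in> T\<close> have "S \<inter> T \<noteq> {}" by blast
    ultimately have "convex_cone (convex hull (S \<inter> T))"
      by (rule convex_cone_convex_hull)
    moreover have "set xs \<subseteq> convex hull (S \<inter> T)"
      using xs(1) hull_subset[of "S \<inter> T" convex] by (rule order.trans)
    ultimately show "X \<in> convex hull (S \<inter> T)"
      unfolding xs(2) by (rule sum_list_in_convex_cone)
  qed
qed

lemma psd_slice_eq_Int_vimage: "{X \<in> psd_cone. X *v c \<in> K} = psd_cone \<inter> (\<lambda>X. X *v c) -` K"
  by auto

lemma closed_psd_slice:
  fixes c :: "real^'n"
  assumes "closed K"
  shows "closed {X \<in> psd_cone. X *v c \<in> K}"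
  unfolding psd_slice_eq_Int_vimage
  by (intro closed_Int closed_psd_cone continuous_closed_vimage assms linear_continuous_at
      bounded_linear_matrix_vector_mult_left)

lemma convex_psd_slice:
  fixes c :: "real^'n"
  assumes "convex K"
  shows "convex {X \<in> psd_cone. X *v c \<in> K}"
  unfolding psd_slice_eq_Int_vimage
  by (intro convex_Int convex_psd_cone convex_linear_vimage assms bounded_linear.linear
      bounded_linear_matrix_vector_mult_left)

lemma cone_psd_slice:
  fixes c :: "real^'n"
  assumes "cone K"
  shows "cone {X \<in> psd_cone. X *v c \<in> K}"
  unfolding cone_def
proof (intro ballI allI impI)
  fix X :: "real^'n^'n" and t :: real
  assume "X \<in> {X \<in> psd_cone. X *v c \<in> K}" "0 \<le> t"
  then show "t *\<^sub>R X \<in> {X \<in> psd_cone. X *v c \<in> K}"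
    by (auto intro: psd_cone_scaleR mem_cone[OF assms] simp flip: scaleR_matrix_vector_assoc)
qed

lemma cone_rank_one: "cone {outer x | x. True}"
  unfolding cone_def
proof (intro ballI allI impI)
  fix X :: "real^'n^'n" and t :: real
  assume "X \<in> {outer x | x. True}" "0 \<le> t"
  then obtain x where "X = outer x" by blast
  with \<open>0 \<le> t\<close> have "t *\<^sub>R X = outer (sqrt t *\<^sub>R x)" by (simp add: outer_scaleR)
  then show "t *\<^sub>R X \<in> {outer x | x. True}" by blast
qed

lemma psd_slice_eq_sum_rank_one:
  fixes c :: "real^'n"
  assumes "cone K" and X: "X \<in> {X \<in> psd_cone. X *v c \<in> K}"
  shows "\<exists>xs. set xs \<subseteq> {X \<in> psd_cone. X *v c \<in> K} \<inter> {outer x | x. True} \<and> X = sum_list xs"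
proof -
  obtain u vs where sum: "X = outer u + (\<Sum>v\<leftarrow>vs. outer v)"
    and carries: "outer u *v c = X *v c" and orth: "\<forall>v\<in>set vs. v \<bullet> c = 0"
    using X psd_eq_outer_plus_sum_outer_orthogonal by blast
  have "0 \<in> K"
    using X cone_contains_0[OF assms(1)] by blast
  then have "outer v *v c \<in> K" if "v \<in> set vs" for v
    using orth that by (simp add: outer_mult_vector)
  with carries X have
    "set (outer u # map outer vs) \<subseteq> {X \<in> psd_cone. X *v c \<in> K} \<inter> {outer x | x. True}"
    by (auto simp: outer_in_psd_cone)
  with sum show ?thesis by (intro exI[of _ "outer u # map outer vs"]) simp
qed

theorem corollary3p5:
  fixes K :: "(real^'n) set" and c :: "real^'n"
  assumes "closed K" and "convex K" and "cone K"
  shows "rank_one_generated {X \<in> psd_cone. X *v c \<in> K}"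
proof -
  let ?S = "{X \<in> psd_cone. X *v c \<in> K}" and ?R = "{outer x | x :: real^'n. True}"
  have "?S = convex hull (?S \<inter> ?R)"
  proof (rule convex_cone_eq_convex_hull_of_sums)
    show "convex ?S" using assms(2) by (rule convex_psd_slice)
    show "cone ?S" using assms(3) by (rule cone_psd_slice)
    show "cone ?R" by (rule cone_rank_one)
    show "0 \<in> ?R" by (intro CollectI exI[of _ 0]) simp
    show "\<exists>xs. set xs \<subseteq> ?S \<inter> ?R \<and> X = sum_list xs" if "X \<in> ?S" for X
      using assms(3) that by (rule psd_slice_eq_sum_rank_one)
  qed
  then show ?thesis
    unfolding rank_one_generated_def
    using closed_psd_slice[OF assms(1)] convex_psd_slice[OF assms(2)] cone_psd_slice[OF assms(3)]
    by (simp add: Collect_restrict)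
qed

end
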